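(* Let $n\ge4$. The set $\{g_1,\dots,g_{n-3},h_1\}$ yields a duality on the algebra $\mathbf C_n$; that is, for the alter ego $(C_n;g_1,\dots,g_{n-3},h_1,\mathscr T)$, the evaluation map $e_{\mathbf C_n}\colon\mathbf C_n\to ED(\mathbf C_n)$ is an isomorphism.
   Context: $\mathbf C_n$ is the Heyting algebra whose universe is the chain $\{0<1<\dots<n-1\}$, with lattice operations min and max, $\bot=0$, $\top=n-1$, and $a\to b=\top$ if $a\le b$, $a\to b=b$ if $b<a$. $\mathcal G_n$ is the class of algebras isomorphic to subalgebras of direct powers of $\mathbf C_n$; $\mathcal G_n(\mathbf A,\mathbf C_n)$ is the set of Heyting homomorphisms $\mathbf A\to\mathbf C_n$. $h_1$ is the endomorphism of $\mathbf C_n$ with $h_1(k)=k+1$ for $1\le k<n-1$ and $h_1(k)=k$ for $k\in\{0,n-1\}$. For $1\le i\le n-3$, $g_i$ is the partial endomorphism with domain $C_n\setminus\{i\}$ given by $g_i(i+1)=i$ and $g_i(k)=k$ for $k\notin\{i,i+1\}$. Natural duality set-up: an alter ego here is $(C_n;P,\mathscr T)$ with $P$ a set of total and partial endomorphisms of $\mathbf C_n$ (homomorphisms from subalgebras of $\mathbf C_n$ into $\mathbf C_n$) and $\mathscr T$ discrete. Powers carry the product topology and pointwise-lifted operations: for $p\in P$, $p^S(x)=p\circ x$, defined iff $x(s)\in\operatorname{dom}p$ for all $s\in S$. A substructure is a subset closed under all these (partial) operations wherever defined. $\mathcal X$ is the class of topological structures isomorphic to closed substructures of powers (empty one included); morphisms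 are continuous maps $\varphi$ preserving total operations and, for partial $p$, such that $x\in\operatorname{dom}p^{\mathbf X}$ implies $\varphi(x)\in\operatorname{dom}p^{\mathbf Y}$ and $\varphi(p^{\mathbf X}(x))=p^{\mathbf Y}(\varphi(x))$. For $\mathbf A\in\mathcal G_n$, $D(\mathbf A)=\mathcal G_n(\mathbf A,\mathbf C_n)$ viewed as a closed substructure of the power with exponent $A$; for $\mathbf X\in\mathcal X$, $E(\mathbf X)$ is the set of $\mathcal X$-morphisms from $\mathbf X$ to the alter ego, a subalgebra of $\mathbf C_n^X$. The evaluation $e_{\mathbf A}\colon\mathbf A\to ED(\mathbf A)$, $e_{\mathbf A}(a)(x)=x(a)$, is always an embedding; $P$ yields a duality on $\mathbf A$ if $e_{\mathbf A}$ is surjective. *)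

theory Defs
  imports "HOL-Library.FuncSet"
begin

text \<open>The chain C_n with universe {0..<n} (natural numbers), bottom 0, top n-1.\<close>

definition cn_top :: "nat \<Rightarrow> nat" where
  "cn_top n = n - 1"

definition cn_imp :: "nat \<Rightarrow> nat \<Rightarrow> nat \<Rightarrow> nat" where
  "cn_imp n a b = (if a \<le> b then cn_top n else b)"

definition heyting_hom :: "nat \<Rightarrow> (nat \<Rightarrow> nat) \<Rightarrow> bool" where
  "heyting_hom n f \<longleftrightarrow>
     (\<forall>a\<in>{0..<n}. f a \<in> {0..<n}) \<and>
     (\<forall>a\<in>{0..<n}. \<forall>b\<in>{0..<n}. f (min a b) = min (f a) (f b)) \<and>
     (\<forall>a\<in>{0..<n}. \<forall>b\<in>{0..<n}. f (max a b) = max (f a) (f b)) \<and>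
     (\<forall>a\<in>{0..<n}. \<forall>b\<in>{0..<n}. f (cn_imp n a b) = cn_imp n (f a) (f b)) \<and>
     f 0 = 0 \<and> f (cn_top n) = cn_top n"

text \<open>The endomorphism h_1 and the partial endomorphisms g_i (domain {0..<n} - {i}).\<close>

definition h1 :: "nat \<Rightarrow> nat \<Rightarrow> nat" where
  "h1 n k = (if 1 \<le> k \<and> k < n - 1 then k + 1 else k)"

definition g :: "nat \<Rightarrow> nat \<Rightarrow> nat" where
  "g i k = (if k = i + 1 then i else k)"

definition D_Cn :: "nat \<Rightarrow> (nat \<Rightarrow> nat) set" where
  "D_Cn n = {x \<in> {0..<n} \<rightarrow>\<^sub>E {0..<n}. heyting_hom n x}"

definition lift :: "nat \<Rightarrow> (nat \<Rightarrow> nat) \<Rightarrow> (nat \<Rightarrow> nat) \<Rightarrow> (nat \<Rightarrow> nat)" where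
  "lift n p x = restrict (p \<circ> x) {0..<n}"

text \<open>D(C_n) is finite, so its product topology is discrete and continuity is automatic.\<close>

definition E_D_Cn :: "nat \<Rightarrow> ((nat \<Rightarrow> nat) \<Rightarrow> nat) set" where
  "E_D_Cn n = {\<phi> \<in> D_Cn n \<rightarrow>\<^sub>E {0..<n}.
      (\<forall>x\<in>D_Cn n. \<phi> (lift n (h1 n) x) = h1 n (\<phi> x)) \<and>
      (\<forall>i. 1 \<le> i \<and> i \<le> n - 3 \<longrightarrow>
         (\<forall>x\<in>D_Cn n. (\<forall>a\<in>{0..<n}. x a \<noteq> i) \<longrightarrow>
            \<phi> x \<noteq> i \<and> \<phi> (lift n (g i) x) = g i (\<phi> x)))}"

definition eval_map :: "nat \<Rightarrow> nat \<Rightarrow> ((nat \<Rightarrow> nat) \<Rightarrow> nat)" where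
  "eval_map n a = restrict (\<lambda>x. x a) (D_Cn n)"

end

theory Submission
  imports Defs
begin

text \<open>The Heyting endomorphisms of \<open>C\<^sub>n\<close> are the maps fixing \<open>0\<close> that increase strictly
  until they reach the top and stay there. Each of them arises from the identity by the
  operations \<open>h\<^sub>1\<close> and \<open>g\<^sub>i\<close> applied pointwise: if \<open>x\<close> has a gap \<open>x k + 1 < x (k + 1)\<close>, then
  \<open>x = g\<^bsub>x k\<^esub> \<circ> y\<close> where \<open>y\<close> raises \<open>x k\<close> by one, and a map without gaps is a power of
  \<open>h\<^sub>1\<close> applied to the identity. A morphism \<open>\<phi>\<close> of the dual commutes with these operations,
  so \<open>\<phi> x = x (\<phi> id)\<close> for every \<open>x\<close>, i.e. \<open>\<phi> = e(\<phi> id)\<close>; evaluating at the identity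
  shows that \<open>e\<close> is injective.\<close>

definition chain_endo :: "nat \<Rightarrow> (nat \<Rightarrow> nat) \<Rightarrow> bool" where
  "chain_endo n x \<longleftrightarrow> x \<in> {0..<n} \<rightarrow>\<^sub>E {0..<n} \<and> x 0 = 0 \<and>
     (\<forall>k. Suc k < n \<longrightarrow> (x k = n - 1 \<longrightarrow> x (Suc k) = n - 1) \<and> (x k < n - 1 \<longrightarrow> x k < x (Suc k)))"

lemma chain_endoI:
  assumes "x \<in> {0..<n} \<rightarrow>\<^sub>E {0..<n}" and "x 0 = 0"
    and "\<And>k. Suc k < n \<Longrightarrow> x k = n - 1 \<Longrightarrow> x (Suc k) = n - 1"
    and "\<And>k. Suc k < n \<Longrightarrow> x k < n - 1 \<Longrightarrow> x k < x (Suc k)"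
  shows "chain_endo n x"
  using assms unfolding chain_endo_def by blast

lemma chain_endo_less: "chain_endo n x \<Longrightarrow> a < n \<Longrightarrow> x a < n"
  unfolding chain_endo_def by auto

lemma chain_endo_undefined: "chain_endo n x \<Longrightarrow> n \<le> a \<Longrightarrow> x a = undefined"
  unfolding chain_endo_def PiE_def extensional_def by auto

lemma chain_endo_top_Suc: "chain_endo n x \<Longrightarrow> Suc k < n \<Longrightarrow> x k = n - 1 \<Longrightarrow> x (Suc k) = n - 1"
  unfolding chain_endo_def by blast

lemma chain_endo_less_Suc: "chain_endo n x \<Longrightarrow> Suc k < n \<Longrightarrow> x k < n - 1 \<Longrightarrow> x k < x (Suc k)"
  unfolding chain_endo_def by blast

lemma chain_endo_le_Suc:
  assumes "chain_endo n x" "Suc k < n"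
  shows "x k \<le> x (Suc k)"
  using assms chain_endo_less[of n x k] chain_endo_top_Suc[of n x k] chain_endo_less_Suc[of n x k]
  by (cases "x k < n - 1") auto

lemma chain_endo_mono: "chain_endo n x \<Longrightarrow> j \<le> l \<Longrightarrow> l < n \<Longrightarrow> x j \<le> x l"
proof (induction l)
  case (Suc l)
  then show ?case using chain_endo_le_Suc[of n x l] by (cases "j = Suc l") auto
qed simp

lemma chain_endo_strict_mono:
  assumes "chain_endo n x" "j < l" "l < n" "x j < n - 1"
  shows "x j < x l"
proof -
  have "x j < x (Suc j)" using assms chain_endo_less_Suc[of n x j] by simp
  also have "\<dots> \<le> x l" using assms chain_endo_mono[of n x "Suc j" l] by simp
  finally show ?thesis .
qed

lemma chain_endo_ge: "chain_endo n x \<Longrightarrow> k < n \<Longrightarrow> k \<le> x k"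
proof (induction k)
  case (Suc k)
  then show ?case
    using chain_endo_less[of n x k] chain_endo_top_Suc[of n x k] chain_endo_less_Suc[of n x k]
    by (cases "x k = n - 1") (auto simp: chain_endo_def)
qed simp

lemma chain_endo_top: "chain_endo n x \<Longrightarrow> 1 \<le> n \<Longrightarrow> x (n - 1) = n - 1"
  using chain_endo_ge[of n x "n - 1"] chain_endo_less[of n x "n - 1"] by auto

text \<open>Below the top a Heyting endomorphism of a chain is strictly increasing, because
  \<open>x (Suc k \<rightarrow> k) = x k\<close> forces \<open>x k < x (Suc k)\<close> unless \<open>x k\<close> is the top.\<close>

lemma heyting_hom_chain_endo:
  assumes x: "x \<in> D_Cn n"
  shows "chain_endo n x"
proof (rule chain_endoI)
  have pi: "x \<in> {0..<n} \<rightarrow>\<^sub>E {0..<n}" and h: "heyting_hom n x"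
    using x unfolding D_Cn_def by auto
  then show "x \<in> {0..<n} \<rightarrow>\<^sub>E {0..<n}" "x 0 = 0" unfolding heyting_hom_def by auto
  fix k assume k: "Suc k < n"
  have "x (min k (Suc k)) = min (x k) (x (Suc k))"
    using h k unfolding heyting_hom_def by (metis atLeastLessThan_iff less_imp_le zero_le Suc_lessD)
  then have le: "x k \<le> x (Suc k)" by (simp add: min_def split: if_splits)
  have "x (cn_imp n (Suc k) k) = cn_imp n (x (Suc k)) (x k)"
    using h k unfolding heyting_hom_def by (metis atLeastLessThan_iff zero_le Suc_lessD)
  then have imp: "x k = cn_imp n (x (Suc k)) (x k)" by (simp add: cn_imp_def)
  have top: "x k = n - 1" if "x (Suc k) \<le> x k"
    using imp that by (simp add: cn_imp_def cn_top_def)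
  show "x k = n - 1 \<Longrightarrow> x (Suc k) = n - 1" using le k PiE_mem[OF pi, of "Suc k"] by fastforce
  show "x k < n - 1 \<Longrightarrow> x k < x (Suc k)" using top by force
qed

lemma chain_endo_heyting_hom:
  assumes x: "chain_endo n x" and n: "1 \<le> n"
  shows "x \<in> D_Cn n"
proof -
  have mono: "\<And>a b. a \<le> b \<Longrightarrow> b < n \<Longrightarrow> x a \<le> x b" using chain_endo_mono[OF x] by blast
  have min: "x (min a b) = min (x a) (x b)" if "a < n" "b < n" for a b
    using mono[of a b] mono[of b a] that by (cases "a \<le> b") (auto simp: min_def)
  have max: "x (max a b) = max (x a) (x b)" if "a < n" "b < n" for a b
    using mono[of a b] mono[of b a] that by (cases "a \<le> b") (auto simp: max_def)
  have imp: "x (cn_imp n a b) = cn_imp n (x a) (x b)" if a: "a < n" and b: "b < n" for a b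
  proof (cases "a \<le> b")
    case True
    then show ?thesis using mono[OF True b] chain_endo_top[OF x n] by (simp add: cn_imp_def cn_top_def)
  next
    case False
    then have "x b \<le> x a" using mono[of b a] a by simp
    moreover have "x b < n - 1 \<Longrightarrow> x b < x a"
      using chain_endo_strict_mono[OF x, of b a] False a by simp
    moreover have "x a < n" using chain_endo_less[OF x a] .
    ultimately show ?thesis using False by (cases "x b < n - 1") (auto simp: cn_imp_def cn_top_def)
  qed
  show ?thesis unfolding D_Cn_def heyting_hom_def
    using x min max imp chain_endo_top[OF x n] unfolding chain_endo_def cn_top_def by auto
qed

lemma D_Cn_iff_chain_endo: "1 \<le> n \<Longrightarrow> x \<in> D_Cn n \<longleftrightarrow> chain_endo n x"
  using chain_endo_heyting_hom heyting_hom_chain_endo by blast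

lemma lift_apply: "a < n \<Longrightarrow> lift n p x a = p (x a)"
  by (simp add: lift_def)

lemma chain_endo_lift_h1:
  assumes x: "chain_endo n x"
  shows "chain_endo n (lift n (h1 n) x)"
proof (rule chain_endoI)
  show "lift n (h1 n) x \<in> {0..<n} \<rightarrow>\<^sub>E {0..<n}"
    using chain_endo_less[OF x] unfolding lift_def h1_def by auto
  show "lift n (h1 n) x 0 = 0"
    using x by (cases n) (auto simp: lift_def h1_def chain_endo_def)
  fix k assume k: "Suc k < n"
  then have "x k < n" "x (Suc k) < n" using chain_endo_less[OF x] by auto
  moreover note chain_endo_top_Suc[OF x k] chain_endo_less_Suc[OF x k]
  ultimately show "lift n (h1 n) x k = n - 1 \<Longrightarrow> lift n (h1 n) x (Suc k) = n - 1"
    and "lift n (h1 n) x k < n - 1 \<Longrightarrow> lift n (h1 n) x k < lift n (h1 n) x (Suc k)"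
    using k by (auto simp: lift_apply h1_def split: if_splits)
qed

lemma chain_endo_lift_g:
  assumes x: "chain_endo n x" and i: "i + 2 < n" and avoid: "\<forall>a\<in>{0..<n}. x a \<noteq> i"
  shows "chain_endo n (lift n (g i) x)"
proof (rule chain_endoI)
  show "lift n (g i) x \<in> {0..<n} \<rightarrow>\<^sub>E {0..<n}"
    using chain_endo_less[OF x] i unfolding lift_def g_def by auto
  show "lift n (g i) x 0 = 0"
    using x i by (simp add: lift_def g_def chain_endo_def)
  have "i + 1 < n - 1" using i by simp
  fix k assume k: "Suc k < n"
  then have "x k < n" "x (Suc k) < n" "x k \<noteq> i" "x (Suc k) \<noteq> i"
    using chain_endo_less[OF x] avoid by auto
  moreover note chain_endo_top_Suc[OF x k] chain_endo_less_Suc[OF x k]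
  ultimately show "lift n (g i) x k = n - 1 \<Longrightarrow> lift n (g i) x (Suc k) = n - 1"
    and "lift n (g i) x k < n - 1 \<Longrightarrow> lift n (g i) x k < lift n (g i) x (Suc k)"
    using k \<open>i + 1 < n - 1\<close> by (auto simp: lift_apply g_def split: if_splits)
qed

definition chain_id :: "nat \<Rightarrow> nat \<Rightarrow> nat" where
  "chain_id n = restrict (\<lambda>k. k) {0..<n}"

lemma chain_id_apply: "a < n \<Longrightarrow> chain_id n a = a"
  by (simp add: chain_id_def)

inductive_set generated_by_id :: "nat \<Rightarrow> (nat \<Rightarrow> nat) set" for n where
  identity: "chain_id n \<in> generated_by_id n"
| lift_h1: "x \<in> generated_by_id n \<Longrightarrow> lift n (h1 n) x \<in> generated_by_id n"
| lift_g: "x \<in> generated_by_id n \<Longrightarrow> 1 \<le> i \<Longrightarrow> i \<le> n - 3 \<Longrightarrow>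
    \<forall>a\<in>{0..<n}. x a \<noteq> i \<Longrightarrow> lift n (g i) x \<in> generated_by_id n"

lemma chain_endo_identity: "1 \<le> n \<Longrightarrow> chain_endo n (chain_id n)"
  unfolding chain_endo_def chain_id_def by auto

lemma generated_by_id_chain_endo: "x \<in> generated_by_id n \<Longrightarrow> 1 \<le> n \<Longrightarrow> chain_endo n x"
proof (induction rule: generated_by_id.induct)
  case (lift_g x i)
  then show ?case using chain_endo_lift_g[of n x i] by simp
qed (auto intro: chain_endo_identity chain_endo_lift_h1)

definition shift_hom :: "nat \<Rightarrow> nat \<Rightarrow> nat \<Rightarrow> nat" where
  "shift_hom n d = restrict (\<lambda>k. if k = 0 then 0 else min (k + d) (n - 1)) {0..<n}"

lemma shift_hom_generated_by_id: "shift_hom n d \<in> generated_by_id n"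
proof (induction d)
  case 0
  have "shift_hom n 0 = chain_id n" unfolding shift_hom_def chain_id_def by auto
  then show ?case using generated_by_id.identity by (simp only:)
next
  case (Suc d)
  have "shift_hom n (Suc d) = lift n (h1 n) (shift_hom n d)"
    unfolding shift_hom_def lift_def h1_def by (rule ext) auto
  then show ?case using generated_by_id.lift_h1[OF Suc] by simp
qed

lemma chain_endo_without_gaps_eq_shift_hom:
  assumes x: "chain_endo n x" and n: "2 \<le> n"
    and no_gap: "\<And>k. 1 \<le> k \<Longrightarrow> Suc k < n \<Longrightarrow> x k < n - 1 \<Longrightarrow> x (Suc k) = Suc (x k)"
  shows "x = shift_hom n (x 1 - 1)"
proof -
  have x1: "1 \<le> x 1" using chain_endo_ge[OF x, of 1] n by simp
  have x_eq: "x k = min (k + (x 1 - 1)) (n - 1)" if "1 \<le> k" "k < n" for k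
    using that
  proof (induction k rule: dec_induct)
    case base
    then show ?case using x1 chain_endo_less[OF x, of 1] by simp
  next
    case (step k)
    then show ?case
      using no_gap[of k] chain_endo_top_Suc[OF x, of k] chain_endo_less[OF x, of k]
      by (cases "x k < n - 1") auto
  qed
  show ?thesis
  proof (intro ext)
    fix a
    consider "a = 0" | "1 \<le> a" "a < n" | "n \<le> a" by linarith
    then show "x a = shift_hom n (x 1 - 1) a"
    proof cases
      case 1
      then show ?thesis using x n by (simp add: shift_hom_def chain_endo_def)
    next
      case 2
      then show ?thesis using x_eq[of a] by (simp add: shift_hom_def)
    next
      case 3
      then show ?thesis using chain_endo_undefined[OF x] by (simp add: shift_hom_def)
    qed
  qed
qed

context
  fixes n :: nat and x :: "nat \<Rightarrow> nat" and k :: nat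
  assumes x: "chain_endo n x" and k: "0 < k" "Suc k < n" and gap: "Suc (x k) < x (Suc k)"
begin

lemma chain_endo_raise: "chain_endo n (x(k := Suc (x k)))"
proof (rule chain_endoI)
  have "x (Suc k) < n" using chain_endo_less[OF x k(2)] .
  then show "x(k := Suc (x k)) \<in> {0..<n} \<rightarrow>\<^sub>E {0..<n}"
    using x k gap unfolding chain_endo_def PiE_def extensional_def by auto
  show "(x(k := Suc (x k))) 0 = 0" using x k unfolding chain_endo_def by auto
  fix j assume j: "Suc j < n"
  have "x j \<le> x k" if "Suc j = k" using chain_endo_mono[OF x, of j k] that k by simp
  then show "(x(k := Suc (x k))) j = n - 1 \<Longrightarrow> (x(k := Suc (x k))) (Suc j) = n - 1"
    and "(x(k := Suc (x k))) j < n - 1 \<Longrightarrow> (x(k := Suc (x k))) j < (x(k := Suc (x k))) (Suc j)"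
    using j gap \<open>x (Suc k) < n\<close> chain_endo_top_Suc[OF x j] chain_endo_less_Suc[OF x j]
    by (auto split: if_splits)
qed

lemma raise_avoids: "\<forall>a\<in>{0..<n}. (x(k := Suc (x k))) a \<noteq> x k"
proof
  fix a assume a: "a \<in> {0..<n}"
  have below_top: "x k < n - 1" using gap chain_endo_less[OF x k(2)] by simp
  consider "a < k" | "a = k" | "k < a" by linarith
  then show "(x(k := Suc (x k))) a \<noteq> x k"
  proof cases
    case 1
    then have "x a < n - 1" using chain_endo_mono[OF x, of a k] below_top k by simp
    then show ?thesis using 1 chain_endo_strict_mono[OF x, of a k] k by simp
  next
    case 3
    then show ?thesis using chain_endo_strict_mono[OF x, of k a] a below_top by simp
  qed simp
qed

lemma lift_g_raise: "lift n (g (x k)) (x(k := Suc (x k))) = x"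
proof
  fix a
  consider "a < k" | "a = k" | "k < a" "a < n" | "n \<le> a" by linarith
  then show "lift n (g (x k)) (x(k := Suc (x k))) a = x a"
  proof cases
    case 1
    then show ?thesis using chain_endo_mono[OF x, of a k] k by (simp add: lift_apply g_def)
  next
    case 2
    then show ?thesis using k by (simp add: lift_apply g_def)
  next
    case 3
    then show ?thesis using chain_endo_mono[OF x, of "Suc k" a] gap by (simp add: lift_apply g_def)
  next
    case 4
    then show ?thesis using chain_endo_undefined[OF x] by (simp add: lift_def)
  qed
qed

end

lemma sum_raise:
  fixes x :: "nat \<Rightarrow> nat"
  assumes "k < n"
  shows "sum (x(k := Suc (x k))) {0..<n} = Suc (sum x {0..<n})"
proof -
  have "sum (x(k := Suc (x k))) {0..<n} = Suc (x k) + sum (x(k := Suc (x k))) ({0..<n} - {k})"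
    using assms by (subst sum.remove[of _ k]) auto
  also have "sum (x(k := Suc (x k))) ({0..<n} - {k}) = sum x ({0..<n} - {k})"
    by (rule sum.cong) auto
  also have "Suc (x k) + sum x ({0..<n} - {k}) = Suc (sum x {0..<n})"
    using assms by (subst (2) sum.remove[of _ k]) auto
  finally show ?thesis .
qed

text \<open>The sum of the values of a Heyting endomorphism of \<open>C\<^sub>n\<close> is at most \<open>n * n\<close>,
  and raising a value strictly below a gap increases it; so induction on
  \<open>n * n - sum x {0..<n}\<close> reduces every endomorphism to one without gaps.\<close>

lemma chain_endo_generated_by_id:
  assumes n: "2 \<le> n"
  shows "chain_endo n x \<Longrightarrow> x \<in> generated_by_id n"
proof (induction "n * n - sum x {0..<n}" arbitrary: x rule: less_induct)
  case less
  note x = less.prems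
  show ?case
  proof (cases "\<exists>k. 0 < k \<and> Suc k < n \<and> Suc (x k) < x (Suc k)")
    case True
    then obtain k where k: "0 < k" "Suc k < n" and gap: "Suc (x k) < x (Suc k)" by blast
    let ?y = "x(k := Suc (x k))"
    have y: "chain_endo n ?y" using chain_endo_raise[OF x k gap] .
    have "sum ?y {0..<n} \<le> n * n"
      using sum_mono[of "{0..<n}" ?y "\<lambda>_. n"] chain_endo_less[OF y] by fastforce
    then have "?y \<in> generated_by_id n"
      using less.hyps[OF _ y] sum_raise[of k n x] k by simp
    moreover have "1 \<le> x k" using chain_endo_ge[OF x, of k] k by simp
    moreover have "x k \<le> n - 3" using gap chain_endo_less[OF x k(2)] by simp
    ultimately have "lift n (g (x k)) ?y \<in> generated_by_id n"
      using generated_by_id.lift_g raise_avoids[OF x k gap] by blast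
    then show ?thesis using lift_g_raise[OF x k gap] by simp
  next
    case False
    have "x (Suc k) = Suc (x k)" if "1 \<le> k" "Suc k < n" "x k < n - 1" for k
      using False chain_endo_less_Suc[OF x, of k] that by fastforce
    then have "x = shift_hom n (x 1 - 1)"
      using chain_endo_without_gaps_eq_shift_hom[OF x n] by blast
    then show ?thesis using shift_hom_generated_by_id by metis
  qed
qed

lemma eval_map_in_E_D_Cn:
  assumes a: "a < n"
  shows "eval_map n a \<in> E_D_Cn n"
proof -
  have n: "1 \<le> n" using a by simp
  have "lift n (h1 n) x \<in> D_Cn n" if "x \<in> D_Cn n" for x
    using that chain_endo_lift_h1 D_Cn_iff_chain_endo[OF n] by blast
  moreover have "lift n (g i) x \<in> D_Cn n"
    if "1 \<le> i" "i \<le> n - 3" "x \<in> D_Cn n" "\<forall>b\<in>{0..<n}. x b \<noteq> i" for i x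
    using that chain_endo_lift_g[of n x i] D_Cn_iff_chain_endo[OF n] by simp
  ultimately show ?thesis
    using a unfolding E_D_Cn_def by (auto simp: eval_map_def lift_apply D_Cn_def)
qed

lemma E_D_Cn_eq_eval_map:
  assumes \<phi>: "\<phi> \<in> E_D_Cn n" and n: "2 \<le> n"
  shows "\<phi> = eval_map n (\<phi> (chain_id n))"
proof -
  have D_iff: "x \<in> D_Cn n \<longleftrightarrow> chain_endo n x" for x using D_Cn_iff_chain_endo n by simp
  have \<phi>_fun: "\<phi> \<in> D_Cn n \<rightarrow>\<^sub>E {0..<n}" using \<phi> unfolding E_D_Cn_def by blast
  have a: "\<phi> (chain_id n) < n" using PiE_mem[OF \<phi>_fun] D_iff chain_endo_identity n by simp
  have "\<phi> x = x (\<phi> (chain_id n))" if "x \<in> generated_by_id n" for x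
    using that
  proof (induction rule: generated_by_id.induct)
    case identity
    show ?case using a by (simp add: chain_id_apply)
  next
    case (lift_h1 x)
    then have "x \<in> D_Cn n" using D_iff generated_by_id_chain_endo n by simp
    then show ?case using \<phi> lift_h1.IH a unfolding E_D_Cn_def by (simp add: lift_apply)
  next
    case (lift_g x i)
    then have "x \<in> D_Cn n" using D_iff generated_by_id_chain_endo n by simp
    then show ?case using \<phi> lift_g a unfolding E_D_Cn_def by (simp add: lift_apply)
  qed
  then have "\<phi> x = x (\<phi> (chain_id n))" if "x \<in> D_Cn n" for x
    using that D_iff chain_endo_generated_by_id n by blast
  then show ?thesis
    using \<phi>_fun unfolding eval_map_def by (auto simp: PiE_def extensional_def)
qed

theorem proposition3p2:
  fixes n :: nat
  assumes "n \<ge> 4"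
  shows "bij_betw (eval_map n) {0..<n} (E_D_Cn n)"
proof (rule bij_betw_imageI)
  have "chain_id n \<in> D_Cn n" using D_Cn_iff_chain_endo chain_endo_identity assms by simp
  then have "eval_map n a (chain_id n) = a" if "a < n" for a
    using that by (simp add: eval_map_def chain_id_apply)
  then show "inj_on (eval_map n) {0..<n}" by (metis atLeastLessThan_iff inj_onI)
  show "eval_map n ` {0..<n} = E_D_Cn n"
  proof
    show "eval_map n ` {0..<n} \<subseteq> E_D_Cn n" using eval_map_in_E_D_Cn by auto
    show "E_D_Cn n \<subseteq> eval_map n ` {0..<n}"
    proof
      fix \<phi> assume \<phi>: "\<phi> \<in> E_D_Cn n"
      have "\<phi> (chain_id n) < n" using \<phi> \<open>chain_id n \<in> D_Cn n\<close> unfolding E_D_Cn_def by auto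
      then show "\<phi> \<in> eval_map n ` {0..<n}" using E_D_Cn_eq_eval_map[OF \<phi>] assms by auto
    qed
  qed
qed

end
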